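(* Let $(\Sigma,\theta)$ be a Noetherian space. The tree topology on the set $T(\Sigma)$ of finite trees over $\Sigma$ is the least fixed point of the map $K$ sending a topology $\tau$ on $T(\Sigma)$ to the topology generated by the sets $\uparrow_{\le_T}U\langle V\rangle$ with $U\in\theta$ and $V$ open in $T(\Sigma)^*$ for the subword topology induced by $\tau$; moreover $K$ is a topology expander.
   Context: A finite tree over $\Sigma$ is $a\langle t_1\cdots t_n\rangle$ with $a\in\Sigma$, $n\ge0$ and $t_i$ finite trees. $\le$ is the specialisation preorder of $\theta$. For a topological space $(A,\sigma)$, the subword topology on $A^*$ is generated by $A^*U_1A^*\cdots A^*U_nA^*$ with $U_i\in\sigma$; Higman's ordering $\le^*$ on $A^*$ relative to a preorder on $A$: $u\le^*w$ iff a strictly increasing map $h$ of positions satisfies $u_i\le w_{h(i)}$. Kruskal's embedding $\le_T$ on $T(\Sigma)$: $s\le_T t$ iff, writing $t=a\langle t_1\cdots t_n\rangle$, either $s\le_T t_i$ for some $i$, or $s=b\langle s_1\cdots s_m\rangle$ with $b\le a$ and $s_1\cdots s_m\le_T^* t_1\cdots t_n$. For $U\subseteq\Sigma$, $V\subseteq T(\Sigma)^*$, $U\langle V\rangle$ is the set of trees $a\langle w\rangle$ with $a\in U$, $w\in V$; $\diamond U\langle V\rangle$ is the set of trees having a subtree in $U\langle V\rangle$. The tree topology is the coarsest topology $\tau$ on $T(\Sigma)$ such that $\diamond U\langle V\rangle$ is open for every $U\in\theta$ and every $V$ open in the subword topology on $T(\Sigma)^*$ built from $\tau$. Noetherian: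 every subset compact. A refinement function is a map from topologies on a set $X$ to topologies on $X$, monotone and preserving Noetherianity; $\tau|_H$ is the topology generated by $\{U\cap H:U\in\tau\}$; a topology expander is a refinement function $R$ with $R(\tau)|_H=R(\tau|_H)|_H$ for all Noetherian $\tau\subseteq R(\tau)$ and all $H$ closed in $\tau$. *)

theory Defs
  imports "HOL-Analysis.Abstract_Topology" "HOL-Library.Sublist"
begin

datatype 'a ftree = Node 'a "'a ftree list"

definition gen_top :: "'b set set \<Rightarrow> 'b topology" where
  "gen_top S = topology_generated_by (insert UNIV S)"

definition top_on_univ :: "'b topology \<Rightarrow> bool" where
  "top_on_univ \<tau> \<longleftrightarrow> topspace \<tau> = UNIV"

definition coarser :: "'b topology \<Rightarrow> 'b topology \<Rightarrow> bool" where
  "coarser \<tau>1 \<tau>2 \<longleftrightarrow> (\<forall>S. openin \<tau>1 S \<longrightarrow> openin \<tau>2 S)"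

definition noetherian :: "'b topology \<Rightarrow> bool" where
  "noetherian \<tau> \<longleftrightarrow> (\<forall>S. S \<subseteq> topspace \<tau> \<longrightarrow> compactin \<tau> S)"

definition spec_le :: "'b topology \<Rightarrow> 'b \<Rightarrow> 'b \<Rightarrow> bool" where
  "spec_le \<theta> x y \<longleftrightarrow> (\<forall>U. openin \<theta> U \<longrightarrow> x \<in> U \<longrightarrow> y \<in> U)"

text \<open>The set A* U1 A* ... A* Un A*.\<close>
definition word_pattern :: "'b set list \<Rightarrow> 'b list set" where
  "word_pattern Us = {w. \<exists>xs. subseq xs w \<and> list_all2 (\<in>) xs Us}"

definition subword_topology :: "'b topology \<Rightarrow> 'b list topology" where
  "subword_topology \<sigma> = gen_top {word_pattern Us | Us. \<forall>U\<in>set Us. openin \<sigma> U}"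

inductive tree_emb :: "('a \<Rightarrow> 'a \<Rightarrow> bool) \<Rightarrow> 'a ftree \<Rightarrow> 'a ftree \<Rightarrow> bool"
  for le :: "'a \<Rightarrow> 'a \<Rightarrow> bool" where
  sub: "t \<in> set ts \<Longrightarrow> tree_emb le s t \<Longrightarrow> tree_emb le s (Node a ts)"
| root: "le b a \<Longrightarrow> list_emb (tree_emb le) ss ts \<Longrightarrow> tree_emb le (Node b ss) (Node a ts)"
  monos list_emb_mono

definition node_set :: "'a set \<Rightarrow> 'a ftree list set \<Rightarrow> 'a ftree set" where
  "node_set U V = {Node a w | a w. a \<in> U \<and> w \<in> V}"

fun subtrees :: "'a ftree \<Rightarrow> 'a ftree set" where
  "subtrees (Node a ts) = insert (Node a ts) (\<Union>t\<in>set ts. subtrees t)"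

definition diamond :: "'a ftree set \<Rightarrow> 'a ftree set" where
  "diamond S = {t. subtrees t \<inter> S \<noteq> {}}"

definition upclosure :: "('b \<Rightarrow> 'b \<Rightarrow> bool) \<Rightarrow> 'b set \<Rightarrow> 'b set" where
  "upclosure le S = {t. \<exists>s\<in>S. le s t}"

definition tree_top_prop :: "'a topology \<Rightarrow> 'a ftree topology \<Rightarrow> bool" where
  "tree_top_prop \<theta> \<tau> \<longleftrightarrow> (\<forall>U V. openin \<theta> U \<longrightarrow> openin (subword_topology \<tau>) V
       \<longrightarrow> openin \<tau> (diamond (node_set U V)))"

definition is_tree_topology :: "'a topology \<Rightarrow> 'a ftree topology \<Rightarrow> bool" where
  "is_tree_topology \<theta> \<tau> \<longleftrightarrow> top_on_univ \<tau> \<and> tree_top_prop \<theta> \<tau> \<and>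
     (\<forall>\<tau>'. top_on_univ \<tau>' \<longrightarrow> tree_top_prop \<theta> \<tau>' \<longrightarrow> coarser \<tau> \<tau>')"

definition tree_topology :: "'a topology \<Rightarrow> 'a ftree topology" where
  "tree_topology \<theta> = (THE \<tau>. is_tree_topology \<theta> \<tau>)"

definition K_map :: "'a topology \<Rightarrow> 'a ftree topology \<Rightarrow> 'a ftree topology" where
  "K_map \<theta> \<tau> = gen_top {upclosure (tree_emb (spec_le \<theta>)) (node_set U V) | U V.
       openin \<theta> U \<and> openin (subword_topology \<tau>) V}"

definition restrict_top :: "'b topology \<Rightarrow> 'b set \<Rightarrow> 'b topology" where
  "restrict_top \<tau> H = gen_top {U \<inter> H | U. openin \<tau> U}"

definition refinement_function :: "('b topology \<Rightarrow> 'b topology) \<Rightarrow> bool" where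
  "refinement_function R \<longleftrightarrow>
     (\<forall>\<tau>. top_on_univ \<tau> \<longrightarrow> top_on_univ (R \<tau>)) \<and>
     (\<forall>\<tau>1 \<tau>2. top_on_univ \<tau>1 \<longrightarrow> top_on_univ \<tau>2 \<longrightarrow> coarser \<tau>1 \<tau>2 \<longrightarrow> coarser (R \<tau>1) (R \<tau>2)) \<and>
     (\<forall>\<tau>. top_on_univ \<tau> \<longrightarrow> noetherian \<tau> \<longrightarrow> noetherian (R \<tau>))"

definition topology_expander :: "('b topology \<Rightarrow> 'b topology) \<Rightarrow> bool" where
  "topology_expander R \<longleftrightarrow> refinement_function R \<and>
     (\<forall>\<tau> H. top_on_univ \<tau> \<longrightarrow> noetherian \<tau> \<longrightarrow> coarser \<tau> (R \<tau>) \<longrightarrow> closedin \<tau> H \<longrightarrow>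
        restrict_top (R \<tau>) H = restrict_top (R (restrict_top \<tau> H)) H)"

definition least_fixpoint :: "('b topology \<Rightarrow> 'b topology) \<Rightarrow> 'b topology \<Rightarrow> bool" where
  "least_fixpoint R \<tau> \<longleftrightarrow> top_on_univ \<tau> \<and> R \<tau> = \<tau> \<and>
     (\<forall>\<tau>'. top_on_univ \<tau>' \<longrightarrow> R \<tau>' = \<tau>' \<longrightarrow> coarser \<tau> \<tau>')"

end

theory Submission
  imports Defs "HOL-Analysis.Function_Topology" "HOL-Library.Ramsey"
begin

text \<open>Everything rests on Kruskal's embedding \<open>\<le>\<^sub>T\<close>. Every open set of \<open>K(\<tau>)\<close>, and every open
  set of the tree topology, is upward closed for \<open>\<le>\<^sub>T\<close>; and for upward closed \<open>U\<close> and \<open>V\<close> the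
  generators \<open>\<up>U\<langle>V\<rangle>\<close> of \<open>K\<close> coincide with the sets \<open>\<diamond>U\<langle>V\<rangle>\<close> of the tree topology, because an
  embedding into a tree either goes into a subtree or matches the root. Hence a fixed point of
  \<open>K\<close> has the defining property of the tree topology, while the tree topology is itself fixed by
  \<open>K\<close>. The set \<open>\<up>U\<langle>V\<rangle>\<close> is the upward closure of an open set of the product of \<open>\<theta>\<close> with the
  subword topology, which is Noetherian by Higman's lemma; so \<open>K\<close> preserves Noetherianity.
  Finally, if \<open>\<tau> \<subseteq> K(\<tau>)\<close> then a \<open>\<tau>\<close>-closed set \<open>H\<close> is downward closed for \<open>\<le>\<^sub>T\<close>, so the trace of
  \<open>\<up>U\<langle>V\<rangle>\<close> on \<open>H\<close> depends only on the trace of \<open>V\<close> on \<open>H\<^sup>*\<close>: this is the expander property.\<close>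

section \<open>Generated topologies and traces\<close>

lemma openin_gen_top: "openin (gen_top S) U \<longleftrightarrow> generate_topology_on (insert UNIV S) U"
  by (simp add: gen_top_def openin_topology_generated_by_iff)

lemma topspace_gen_top [simp]: "topspace (gen_top S) = UNIV"
  by (auto simp: gen_top_def topology_generated_by_topspace)

lemma top_on_univ_gen_top [simp]: "top_on_univ (gen_top S)"
  by (simp add: top_on_univ_def)

lemma openin_UNIV_if_top_on_univ: "top_on_univ \<tau> \<Longrightarrow> openin \<tau> UNIV"
  by (metis openin_topspace top_on_univ_def)

lemma openin_gen_top_Basis: "U \<in> S \<Longrightarrow> openin (gen_top S) U"
  by (simp add: openin_gen_top generate_topology_on.Basis)

lemma gen_top_induct [consumes 1, case_names UNIV empty Int Union Basis]:
  assumes "openin (gen_top S) U"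
    and "P UNIV" and "P {}" and "\<And>a b. P a \<Longrightarrow> P b \<Longrightarrow> P (a \<inter> b)"
    and "\<And>K. (\<And>k. k \<in> K \<Longrightarrow> P k) \<Longrightarrow> P (\<Union>K)"
    and "\<And>U. U \<in> S \<Longrightarrow> P U"
  shows "P U"
proof -
  have "generate_topology_on (insert UNIV S) U" using assms(1) by (simp add: openin_gen_top)
  then show ?thesis
    by (induction rule: generate_topology_on.induct) (use assms in auto)
qed

lemma gen_top_coarsest:
  assumes "top_on_univ \<tau>" and "\<And>U. U \<in> S \<Longrightarrow> openin \<tau> U"
  shows "coarser (gen_top S) \<tau>"
  unfolding coarser_def
proof (intro allI impI)
  fix U assume "openin (gen_top S) U"
  then show "openin \<tau> U"
    by (induction rule: gen_top_induct)
       (use assms in \<open>auto intro: openin_Union openin_UNIV_if_top_on_univ\<close>)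
qed

lemma gen_top_mono: "S \<subseteq> S' \<Longrightarrow> coarser (gen_top S) (gen_top S')"
  by (rule gen_top_coarsest) (auto intro: openin_gen_top_Basis)

lemma coarser_antisym: "coarser \<tau>1 \<tau>2 \<Longrightarrow> coarser \<tau>2 \<tau>1 \<Longrightarrow> \<tau>1 = \<tau>2"
  by (auto simp: coarser_def topology_eq)

lemma gen_top_trace_transfer:
  assumes U: "openin (gen_top S) U" and \<sigma>: "top_on_univ \<sigma>"
    and S: "\<And>X. X \<in> S \<Longrightarrow> \<exists>Y. openin \<sigma> Y \<and> X \<inter> H = Y \<inter> H"
  shows "\<exists>Y. openin \<sigma> Y \<and> U \<inter> H = Y \<inter> H"
  using U
proof (induction rule: gen_top_induct)
  case UNIV
  then show ?case using openin_UNIV_if_top_on_univ[OF \<sigma>] by blast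
next
  case empty
  then show ?case by (intro exI[of _ "{}"]) simp
next
  case (Int a b)
  then obtain Ya Yb where "openin \<sigma> Ya" "a \<inter> H = Ya \<inter> H" "openin \<sigma> Yb" "b \<inter> H = Yb \<inter> H"
    by blast
  then show ?case by (intro exI[of _ "Ya \<inter> Yb"]) (auto intro: openin_Int)
next
  case (Union K)
  then obtain g where g: "\<And>k. k \<in> K \<Longrightarrow> openin \<sigma> (g k) \<and> k \<inter> H = g k \<inter> H"
    by metis
  then have "openin \<sigma> (\<Union>(g ` K))" by (auto intro: openin_Union)
  moreover have "\<Union>K \<inter> H = \<Union>(g ` K) \<inter> H" using g by blast
  ultimately show ?case by blast
next
  case (Basis X)
  then show ?case using S by blast
qed

lemma openin_restrict_topE:
  assumes "top_on_univ \<tau>" and "openin (restrict_top \<tau> H) A"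
  obtains U where "openin \<tau> U" and "A \<inter> H = U \<inter> H"
  using gen_top_trace_transfer[OF assms(2)[unfolded restrict_top_def] assms(1)] by blast

lemma restrict_top_gen_top:
  assumes "UNIV \<in> S"
  shows "restrict_top (gen_top S) H = gen_top {W \<inter> H | W. W \<in> S}"
  unfolding restrict_top_def
proof (rule coarser_antisym)
  let ?T = "gen_top {W \<inter> H | W. W \<in> S}"
  show "coarser (gen_top {U \<inter> H | U. openin (gen_top S) U}) ?T"
  proof (rule gen_top_coarsest)
    fix X assume "X \<in> {U \<inter> H | U. openin (gen_top S) U}"
    then obtain U where U: "openin (gen_top S) U" "X = U \<inter> H" by blast
    have "openin ?T (W \<inter> H)" if "W \<in> S" for W
      using that by (intro openin_gen_top_Basis) blast
    then obtain Y where Y: "openin ?T Y" "U \<inter> H = Y \<inter> H"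
      using gen_top_trace_transfer[OF U(1) top_on_univ_gen_top, where H = H] by blast
    moreover have "openin ?T H"
      using assms by (intro openin_gen_top_Basis) blast
    ultimately show "openin ?T X" using U(2) Y by (simp add: openin_Int)
  qed simp
  show "coarser ?T (gen_top {U \<inter> H | U. openin (gen_top S) U})"
    by (rule gen_top_mono) (auto intro: openin_gen_top_Basis)
qed

section \<open>Finite subunions and Noetherian spaces\<close>

definition has_finite_subunion :: "'b set set \<Rightarrow> bool" where
  "has_finite_subunion F \<longleftrightarrow> (\<exists>F'\<subseteq>F. finite F' \<and> \<Union>F' = \<Union>F)"

lemma subtopology_gen_top_eq_subbase:
  "subtopology (gen_top S) Y =
     topology (arbitrary union_of (finite intersection_of (\<lambda>x. x \<in> insert UNIV S) relative_to Y))"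
proof -
  let ?B = "insert UNIV S"
  have fin: "finite intersection_of (\<lambda>x. x \<in> ?B) = finite' intersection_of (\<lambda>x. x \<in> ?B)"
  proof (intro ext iffI)
    fix T assume "(finite intersection_of (\<lambda>x. x \<in> ?B)) T"
    then obtain F where F: "finite F" "F \<subseteq> ?B" "\<Inter>F = T" by (auto simp: intersection_of_def)
    show "(finite' intersection_of (\<lambda>x. x \<in> ?B)) T"
    proof (cases "F = {}")
      case True
      then show ?thesis using F unfolding intersection_of_def by (intro exI[of _ "{UNIV}"]) auto
    next
      case False
      then show ?thesis using F unfolding intersection_of_def by blast
    qed
  qed (auto simp: intersection_of_def)
  have "(arbitrary union_of (finite intersection_of (\<lambda>x. x \<in> ?B) relative_to Y)) T \<longleftrightarrow>
        openin (subtopology (gen_top S) Y) T" for T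
  proof -
    have "(arbitrary union_of (finite intersection_of (\<lambda>x. x \<in> ?B) relative_to Y)) T \<longleftrightarrow>
        ((arbitrary union_of (finite' intersection_of (\<lambda>x. x \<in> ?B))) relative_to Y) T"
      by (simp only: arbitrary_union_of_relative_to[symmetric] fin)
    also have "\<dots> \<longleftrightarrow> (\<exists>U. generate_topology_on ?B U \<and> Y \<inter> U = T)"
      by (simp add: relative_to_def generate_topology_on_eq)
    also have "\<dots> \<longleftrightarrow> openin (subtopology (gen_top S) Y) T"
      by (auto simp: openin_subtopology openin_gen_top)
    finally show ?thesis .
  qed
  then show ?thesis unfolding topology_eq openin_subbase by simp
qed

lemma noetherian_gen_top:
  assumes "\<And>C. C \<subseteq> S \<Longrightarrow> has_finite_subunion C"
  shows "noetherian (gen_top S)"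
  unfolding noetherian_def
proof (intro allI impI)
  fix Y
  have "\<exists>C'. finite C' \<and> C' \<subseteq> C \<and> Y \<subseteq> \<Union>C'" if "C \<subseteq> insert UNIV S" "Y \<subseteq> \<Union>C" for C
  proof (cases "UNIV \<in> C")
    case True
    then show ?thesis by (intro exI[of _ "{UNIV}"]) auto
  next
    case False
    then have "C \<subseteq> S" using that by auto
    then show ?thesis using assms that unfolding has_finite_subunion_def by metis
  qed
  then have "compact_space (subtopology (gen_top S) Y)"
    by (intro Alexander_subbase_alt[of Y "insert UNIV S"] subtopology_gen_top_eq_subbase[symmetric])
      auto
  then show "compactin (gen_top S) Y"
    by (simp add: compactin_subspace)
qed

lemma has_finite_subunion_opens:
  assumes "noetherian \<sigma>" and "\<And>G. G \<in> \<G> \<Longrightarrow> openin \<sigma> G"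
  shows "has_finite_subunion \<G>"
proof -
  have "\<Union>\<G> \<subseteq> topspace \<sigma>" using assms(2) openin_subset by blast
  then have "compactin \<sigma> (\<Union>\<G>)" using assms(1) by (simp add: noetherian_def)
  then obtain F where "finite F" "F \<subseteq> \<G>" "\<Union>\<G> \<subseteq> \<Union>F"
    unfolding compactin_def using assms(2) by (metis order_refl)
  then show ?thesis unfolding has_finite_subunion_def by (intro exI[of _ F]) auto
qed

lemma has_finite_subunion_Un:
  "has_finite_subunion A \<Longrightarrow> has_finite_subunion B \<Longrightarrow> has_finite_subunion (A \<union> B)"
  unfolding has_finite_subunion_def by (metis Union_Un_distrib Un_mono finite_UnI)

lemma has_finite_subunion_relational_images:
  assumes "noetherian \<sigma>"
    and F: "\<And>X. X \<in> F \<Longrightarrow> \<exists>A. openin \<sigma> A \<and> X = {t. \<exists>s\<in>A. r s t}"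
  shows "has_finite_subunion F"
proof -
  obtain g where g: "\<And>X. X \<in> F \<Longrightarrow> openin \<sigma> (g X) \<and> X = {t. \<exists>s\<in>g X. r s t}"
    using F by metis
  have "has_finite_subunion (g ` F)" using g by (intro has_finite_subunion_opens[OF assms(1)]) auto
  then obtain G' where "G' \<subseteq> g ` F" "finite G'" "\<Union>G' = \<Union>(g ` F)"
    unfolding has_finite_subunion_def by blast
  then obtain F' where F': "F' \<subseteq> F" "finite F'" "\<Union>(g ` F') = \<Union>(g ` F)"
    by (metis finite_subset_image)
  have "\<Union>F \<subseteq> \<Union>F'"
  proof
    fix t assume "t \<in> \<Union>F"
    then obtain X where X: "X \<in> F" "t \<in> X" by blast
    then obtain s where s: "s \<in> g X" "r s t" using g by blast
    then have "s \<in> \<Union>(g ` F')" using F'(3) X(1) by blast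
    then obtain Y where Y: "Y \<in> F'" "s \<in> g Y" by blast
    then have "t \<in> Y" using g[of Y] F'(1) s(2) by blast
    then show "t \<in> \<Union>F'" using Y(1) by blast
  qed
  then show ?thesis using F' unfolding has_finite_subunion_def by blast
qed

lemma dependent_prefix_choice:
  assumes "I []" and "\<And>xs. I xs \<Longrightarrow> \<exists>y. I (xs @ [y]) \<and> R xs y"
  obtains f where "\<And>n. I (map f [0..<n])" and "\<And>n. R (map f [0..<n]) (f n)"
proof -
  define c where "c xs = (SOME y. I (xs @ [y]) \<and> R xs y)" for xs
  have c: "I (xs @ [c xs]) \<and> R xs (c xs)" if "I xs" for xs
    unfolding c_def using assms(2)[OF that] by (rule someI_ex)
  define pre where "pre = rec_nat [] (\<lambda>_ xs. xs @ [c xs])"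
  have pre_Suc: "pre (Suc n) = pre n @ [c (pre n)]" for n by (simp add: pre_def)
  have I_pre: "I (pre n)" for n
    by (induction n) (simp_all add: pre_Suc c, simp add: pre_def assms(1))
  have map_pre: "map (\<lambda>k. c (pre k)) [0..<n] = pre n" for n
    by (induction n) (simp_all add: pre_Suc, simp add: pre_def)
  show ?thesis
    by (rule that[of "\<lambda>k. c (pre k)"]) (simp_all only: map_pre I_pre c)
qed

lemma has_finite_subunion_if_good_seqs:
  assumes "\<And>(P :: nat \<Rightarrow> 'b set) w. (\<And>j. P j \<in> F) \<Longrightarrow> (\<And>j. w j \<in> P j) \<Longrightarrow>
             \<exists>i j. i < j \<and> w j \<in> P i"
  shows "has_finite_subunion F"
proof (rule ccontr)
  assume no_subunion: "\<not> has_finite_subunion F"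
  define I where "I xs \<longleftrightarrow> (\<forall>p\<in>set xs. fst p \<in> F \<and> snd p \<in> fst p)" for xs :: "('b set \<times> 'b) list"
  have step: "\<exists>p. I (xs @ [p]) \<and> snd p \<notin> \<Union>(fst ` set xs)" if "I xs" for xs
  proof -
    have "finite (fst ` set xs)" "fst ` set xs \<subseteq> F" using that by (auto simp: I_def)
    then have "\<Union>(fst ` set xs) \<noteq> \<Union>F" using no_subunion unfolding has_finite_subunion_def by blast
    moreover have "\<Union>(fst ` set xs) \<subseteq> \<Union>F" using \<open>fst ` set xs \<subseteq> F\<close> by blast
    ultimately obtain X w where "X \<in> F" "w \<in> X" "w \<notin> \<Union>(fst ` set xs)" by blast
    then show ?thesis using that by (intro exI[of _ "(X, w)"]) (auto simp: I_def)
  qed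
  obtain f where f: "\<And>n. I (map f [0..<n])" "\<And>n. snd (f n) \<notin> \<Union>(fst ` set (map f [0..<n]))"
    by (rule dependent_prefix_choice[of I "\<lambda>xs p. snd p \<notin> \<Union>(fst ` set xs)", OF _ step])
      (auto simp: I_def)
  have "fst (f j) \<in> F" "snd (f j) \<in> fst (f j)" for j
    using f(1)[of "Suc j"] by (auto simp: I_def)
  then obtain i j where "i < j" "snd (f j) \<in> fst (f i)"
    using assms[of "\<lambda>j. fst (f j)" "\<lambda>j. snd (f j)"] by blast
  then show False using f(2)[of j] by auto
qed

section \<open>Higman's lemma\<close>

lemma list_emb_compose:
  assumes "list_emb P xs ys" and "list_emb Q ys zs" and "\<And>x y z. P x y \<Longrightarrow> Q y z \<Longrightarrow> R x z"
  shows "list_emb R xs zs"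
  using assms(2,1)
proof (induction arbitrary: xs rule: list_emb.induct)
  case (list_emb_Nil zs)
  then show ?case by (auto dest: list_emb_Nil2)
next
  case (list_emb_Cons ys zs z)
  then show ?case by blast
next
  case (list_emb_Cons2 y z ys zs)
  show ?case
  proof (cases xs)
    case Nil
    then show ?thesis by simp
  next
    case (Cons x xs')
    from list_emb_Cons2.prems[unfolded Cons]
    consider "P x y" "list_emb P xs' ys" | "list_emb P (x # xs') ys"
      by (cases rule: list_emb.cases) auto
    then show ?thesis
      using list_emb_Cons2 assms(3) Cons by cases blast+
  qed
qed

lemma list_emb_iff_subseq_list_all2:
  "list_emb P xs ys \<longleftrightarrow> (\<exists>zs. subseq zs ys \<and> list_all2 P xs zs)"
proof
  show "list_emb P xs ys \<Longrightarrow> \<exists>zs. subseq zs ys \<and> list_all2 P xs zs"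
  proof (induction rule: list_emb.induct)
    case (list_emb_Cons2 x y xs ys)
    then obtain zs where "subseq zs ys" "list_all2 P xs zs" by blast
    then show ?case using list_emb_Cons2 by (intro exI[of _ "y # zs"]) auto
  qed auto
next
  assume "\<exists>zs. subseq zs ys \<and> list_all2 P xs zs"
  then obtain zs where "subseq zs ys" "list_all2 P xs zs" by blast
  moreover have "list_emb P xs zs"
    using \<open>list_all2 P xs zs\<close> by (induction rule: list_all2_induct) auto
  ultimately show "list_emb P xs ys" by (auto intro: list_emb_compose)
qed

definition good :: "('x \<Rightarrow> 'x \<Rightarrow> bool) \<Rightarrow> (nat \<Rightarrow> 'x) \<Rightarrow> bool" where
  "good P f \<longleftrightarrow> (\<exists>i j. i < j \<and> P (f i) (f j))"

definition almost_full_on :: "('x \<Rightarrow> 'x \<Rightarrow> bool) \<Rightarrow> 'x set \<Rightarrow> bool" where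
  "almost_full_on P A \<longleftrightarrow> (\<forall>f. (\<forall>i. f i \<in> A) \<longrightarrow> good P f)"

lemma almost_full_on_chain_subseq:
  assumes af: "almost_full_on P A" and h: "\<And>i. h i \<in> A"
  shows "\<exists>\<phi> :: nat \<Rightarrow> nat. strict_mono \<phi> \<and> (\<forall>k l. k < l \<longrightarrow> P (h (\<phi> k)) (h (\<phi> l)))"
proof -
  define col where "col X = (if P (h (Min X)) (h (Max X)) then 0 else 1::nat)" for X :: "nat set"
  have "\<exists>Y t. Y \<subseteq> UNIV \<and> infinite Y \<and> t < (2::nat) \<and>
      (\<forall>X. X \<subseteq> Y \<and> finite X \<and> card X = 2 \<longrightarrow> col X = t)"
    by (rule Ramsey) (simp_all add: col_def)
  then obtain Y t where Y: "infinite Y"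
    and hom: "\<forall>X. X \<subseteq> Y \<and> finite X \<and> card X = 2 \<longrightarrow> col X = t"
    by blast
  define \<phi> where "\<phi> = enumerate Y"
  have sm: "strict_mono \<phi>" using Y by (simp add: \<phi>_def strict_mono_enumerate)
  have col_\<phi>: "(if P (h (\<phi> k)) (h (\<phi> l)) then 0 else 1) = t" if "k < l" for k l
  proof -
    have lt: "\<phi> k < \<phi> l" using sm that by (simp add: strict_mono_less)
    have "\<phi> k \<in> Y" "\<phi> l \<in> Y" using Y by (simp_all add: \<phi>_def enumerate_in_set)
    then have "col {\<phi> k, \<phi> l} = t" using lt hom by simp
    moreover have "Min {\<phi> k, \<phi> l} = \<phi> k" "Max {\<phi> k, \<phi> l} = \<phi> l" using lt by auto
    ultimately show ?thesis by (simp add: col_def)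
  qed
  have "t = 0"
  proof (rule ccontr)
    assume "t \<noteq> 0"
    then have "\<not> P (h (\<phi> k)) (h (\<phi> l))" if "k < l" for k l
      using col_\<phi>[OF that] by auto
    moreover have "good P (h \<circ> \<phi>)" using af h by (simp add: almost_full_on_def)
    ultimately show False by (auto simp: good_def)
  qed
  then have "P (h (\<phi> k)) (h (\<phi> l))" if "k < l" for k l
    using col_\<phi>[OF that] by (simp split: if_splits)
  with sm show ?thesis by blast
qed

lemma ex_minimal_bad_seq:
  fixes sz :: "'x \<Rightarrow> nat"
  assumes "\<And>i. f i \<in> A" and "\<not> good P f"
  shows "\<exists>m. (\<forall>i. m i \<in> A) \<and> \<not> good P m \<and>
    (\<forall>g n. (\<forall>i. g i \<in> A) \<and> \<not> good P g \<and> (\<forall>i<n. g i = m i) \<longrightarrow> sz (m n) \<le> sz (g n))"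
proof -
  define bad_ext where
    "bad_ext xs \<longleftrightarrow> (\<exists>g. (\<forall>i. g i \<in> A) \<and> \<not> good P g \<and> (\<forall>i<length xs. g i = xs ! i))" for xs
  have bad_ext_snoc: "bad_ext (xs @ [g (length xs)])"
    if "\<forall>i. g i \<in> A" "\<not> good P g" "\<forall>i<length xs. g i = xs ! i" for g xs
    using that unfolding bad_ext_def by (intro exI[of _ g]) (auto simp: nth_append less_Suc_eq)
  have step: "\<exists>y. bad_ext (xs @ [y]) \<and> (\<forall>z. bad_ext (xs @ [z]) \<longrightarrow> sz y \<le> sz z)"
    if ext: "bad_ext xs" for xs
  proof -
    obtain g where "\<forall>i. g i \<in> A" "\<not> good P g" "\<forall>i<length xs. g i = xs ! i"
      using ext unfolding bad_ext_def by blast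
    then have "bad_ext (xs @ [g (length xs)])" by (rule bad_ext_snoc)
    then show ?thesis by (rule ex_has_least_nat[where m = sz])
  qed
  have "bad_ext []" using assms unfolding bad_ext_def by auto
  then obtain m where m: "\<And>n. bad_ext (map m [0..<n])"
    and least: "\<And>n. \<forall>z. bad_ext (map m [0..<n] @ [z]) \<longrightarrow> sz (m n) \<le> sz z"
    using dependent_prefix_choice[of bad_ext, OF _ step] by blast
  have m_agree: "\<exists>g. (\<forall>i. g i \<in> A) \<and> \<not> good P g \<and> (\<forall>i\<le>n. g i = m i)" for n
    using m[of "Suc n"] unfolding bad_ext_def by (auto simp del: upt_Suc simp: less_Suc_eq_le)
  have "m i \<in> A" for i using m_agree[of i] by (metis order_refl)
  moreover have "\<not> good P m"
  proof
    assume "good P m"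
    then obtain i j where "i < j" "P (m i) (m j)" by (auto simp: good_def)
    moreover obtain g where "\<not> good P g" "\<forall>k\<le>j. g k = m k" using m_agree[of j] by blast
    ultimately show False by (metis good_def less_imp_le order_refl)
  qed
  moreover have "sz (m n) \<le> sz (g n)"
    if "\<forall>i. g i \<in> A" "\<not> good P g" "\<forall>i<n. g i = m i" for g n
  proof -
    have "bad_ext (map m [0..<n] @ [g n])"
      using bad_ext_snoc[of g "map m [0..<n]"] that by simp
    then show ?thesis using least by blast
  qed
  ultimately show ?thesis by blast
qed

lemma good_cons_seq_if_good_spliced_tails:
  fixes h :: "nat \<Rightarrow> 'x" and t :: "nat \<Rightarrow> 'x list"
  assumes \<phi>: "strict_mono \<phi>" and chain: "\<And>k l. k < l \<Longrightarrow> P (h (\<phi> k)) (h (\<phi> l))"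
    and b: "\<And>i. b i = (if i < \<phi> 0 then h i # t i else t (\<phi> (i - \<phi> 0)))"
    and "good (list_emb P) b"
  shows "good (list_emb P) (\<lambda>i. h i # t i)"
proof -
  obtain i j where ij: "i < j" "list_emb P (b i) (b j)" using assms(4) unfolding good_def by blast
  have \<phi>_ge: "\<phi> 0 \<le> \<phi> k" for k using \<phi> by (simp add: strict_mono_less_eq)
  consider "j < \<phi> 0" | "\<not> j < \<phi> 0" "i < \<phi> 0" | "\<not> i < \<phi> 0" by linarith
  then show ?thesis
  proof cases
    case 1
    then show ?thesis using ij by (auto simp: good_def b)
  next
    case 2
    let ?j' = "\<phi> (j - \<phi> 0)"
    have "list_emb P (h i # t i) (t ?j')" using ij 2 by (simp add: b)
    then have "list_emb P (h i # t i) (h ?j' # t ?j')" by (rule list_emb_Cons)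
    moreover have "i < ?j'" using 2 \<phi>_ge[of "j - \<phi> 0"] by simp
    ultimately show ?thesis unfolding good_def by blast
  next
    case 3
    let ?i' = "\<phi> (i - \<phi> 0)" and ?j' = "\<phi> (j - \<phi> 0)"
    have "i - \<phi> 0 < j - \<phi> 0" using ij 3 by simp
    then have "list_emb P (h ?i' # t ?i') (h ?j' # t ?j')" "?i' < ?j'"
      using ij 3 chain \<phi> by (simp_all add: b strict_mono_less)
    then show ?thesis unfolding good_def by blast
  qed
qed

text \<open>Nash-Williams' argument: from a minimal bad sequence, the tails of the terms along a
  chain of their heads would form a smaller bad sequence.\<close>

theorem almost_full_on_lists:
  assumes af: "almost_full_on P A"
  shows "almost_full_on (list_emb P) (lists A)"
  unfolding almost_full_on_def
proof (intro allI impI; rule ccontr)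
  fix f assume fA: "\<forall>i. f i \<in> lists A" and f_bad: "\<not> good (list_emb P) f"
  obtain m where mA: "\<And>i. m i \<in> lists A" and m_bad: "\<not> good (list_emb P) m"
    and m_min: "\<And>g n. \<forall>i. g i \<in> lists A \<Longrightarrow> \<not> good (list_emb P) g \<Longrightarrow>
                  \<forall>i<n. g i = m i \<Longrightarrow> length (m n) \<le> length (g n)"
    using ex_minimal_bad_seq[where sz = length, OF fA[rule_format] f_bad] by blast
  have "m i \<noteq> []" for i
  proof
    assume "m i = []"
    then have "list_emb P (m i) (m (Suc i))" by simp
    with m_bad show False unfolding good_def by blast
  qed
  define h where "h i = hd (m i)" for i
  define t where "t i = tl (m i)" for i
  have m_eq: "m = (\<lambda>i. h i # t i)" using \<open>m _ \<noteq> []\<close> by (simp add: h_def t_def)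
  have hA: "h i \<in> A" and tA: "t i \<in> lists A" for i using mA[of i] by (simp_all add: m_eq)
  obtain \<phi> :: "nat \<Rightarrow> nat" where \<phi>: "strict_mono \<phi>"
    and chain: "\<And>k l. k < l \<Longrightarrow> P (h (\<phi> k)) (h (\<phi> l))"
    using almost_full_on_chain_subseq[of P A h] af hA by blast
  define b where "b i = (if i < \<phi> 0 then m i else t (\<phi> (i - \<phi> 0)))" for i
  have bA: "b i \<in> lists A" for i using mA tA by (simp add: b_def)
  have "good (list_emb P) b"
  proof (rule ccontr)
    assume b_bad: "\<not> good (list_emb P) b"
    have "\<forall>i<\<phi> 0. b i = m i" by (simp add: b_def)
    then have "length (m (\<phi> 0)) \<le> length (b (\<phi> 0))" by (rule m_min[OF allI[OF bA] b_bad])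
    then show False by (simp add: b_def m_eq)
  qed
  moreover have "b i = (if i < \<phi> 0 then h i # t i else t (\<phi> (i - \<phi> 0)))" for i
    by (simp add: b_def m_eq)
  ultimately have "good (list_emb P) (\<lambda>i. h i # t i)"
    using good_cons_seq_if_good_spliced_tails[where P = P and \<phi> = \<phi> and h = h and t = t, OF \<phi> chain]
    by blast
  with m_bad m_eq show False by simp
qed

section \<open>The subword topology\<close>

definition up_closed :: "('b \<Rightarrow> 'b \<Rightarrow> bool) \<Rightarrow> 'b set \<Rightarrow> bool" where
  "up_closed r S \<longleftrightarrow> (\<forall>x y. x \<in> S \<longrightarrow> r x y \<longrightarrow> y \<in> S)"

lemma up_closed_gen_top:
  assumes "openin (gen_top S) U" and "\<And>X. X \<in> S \<Longrightarrow> up_closed r X"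
  shows "up_closed r U"
  using assms(1) by (induction rule: gen_top_induct) (use assms(2) in \<open>auto simp: up_closed_def\<close>)

lemma up_closed_upclosure:
  assumes "\<And>x y z. r x y \<Longrightarrow> r y z \<Longrightarrow> r x z"
  shows "up_closed r (upclosure r A)"
  using assms unfolding up_closed_def upclosure_def by blast

lemma up_closed_word_pattern:
  assumes "\<And>U. U \<in> set Us \<Longrightarrow> up_closed le U"
  shows "up_closed (list_emb le) (word_pattern Us)"
  unfolding up_closed_def
proof (intro allI impI)
  fix w w' assume "w \<in> word_pattern Us" and ww': "list_emb le w w'"
  then obtain xs where xs: "subseq xs w" "list_all2 (\<in>) xs Us" by (auto simp: word_pattern_def)
  have "list_emb le xs w'" using xs(1) ww' by (rule list_emb_compose) simp
  then obtain zs where zs: "subseq zs w'" "list_all2 le xs zs"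
    using list_emb_iff_subseq_list_all2 by blast
  have "list_all2 (\<in>) zs Us"
    using xs(2) zs(2) assms unfolding list_all2_conv_all_nth up_closed_def by (metis nth_mem)
  then show "w' \<in> word_pattern Us" using zs(1) by (auto simp: word_pattern_def)
qed

lemma word_pattern_trace:
  assumes "list_all2 (\<lambda>U W. U \<inter> H = W \<inter> H) Us Ws" and "w \<in> lists H" and "w \<in> word_pattern Us"
  shows "w \<in> word_pattern Ws"
proof -
  obtain xs where xs: "subseq xs w" "list_all2 (\<in>) xs Us"
    using assms(3) by (auto simp: word_pattern_def)
  have "set xs \<subseteq> H" using xs(1) assms(2) by (auto elim: list_emb_set)
  then have "list_all2 (\<in>) xs Ws"
    using xs(2) assms(1) unfolding list_all2_conv_all_nth by (metis Int_iff nth_mem subsetD)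
  then show ?thesis using xs(1) by (auto simp: word_pattern_def)
qed

lemma openin_word_pattern:
  "(\<And>U. U \<in> set Us \<Longrightarrow> openin \<tau> U) \<Longrightarrow> openin (subword_topology \<tau>) (word_pattern Us)"
  unfolding subword_topology_def by (intro openin_gen_top_Basis) blast

lemma subword_topology_mono: "coarser \<tau>1 \<tau>2 \<Longrightarrow> coarser (subword_topology \<tau>1) (subword_topology \<tau>2)"
  unfolding subword_topology_def by (rule gen_top_mono) (auto simp: coarser_def)

lemma up_closed_subword_topology:
  assumes "\<And>U. openin \<tau> U \<Longrightarrow> up_closed le U" and "openin (subword_topology \<tau>) V"
  shows "up_closed (list_emb le) V"
  using assms(2) unfolding subword_topology_def
  by (rule up_closed_gen_top) (use assms(1) up_closed_word_pattern in blast)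

lemma subword_topology_trace_transfer:
  assumes "\<And>A. openin \<sigma>1 A \<Longrightarrow> \<exists>B. openin \<sigma>2 B \<and> A \<inter> H = B \<inter> H"
    and "openin (subword_topology \<sigma>1) V"
  shows "\<exists>V'. openin (subword_topology \<sigma>2) V' \<and> V \<inter> lists H = V' \<inter> lists H"
proof (rule gen_top_trace_transfer[OF assms(2)[unfolded subword_topology_def]])
  show "top_on_univ (subword_topology \<sigma>2)" by (simp add: subword_topology_def)
  fix X assume "X \<in> {word_pattern Us | Us. \<forall>U\<in>set Us. openin \<sigma>1 U}"
  then obtain Us where X: "X = word_pattern Us" and Us: "\<forall>U\<in>set Us. openin \<sigma>1 U" by blast
  obtain g where g: "\<And>A. openin \<sigma>1 A \<Longrightarrow> openin \<sigma>2 (g A) \<and> A \<inter> H = g A \<inter> H"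
    using assms(1) by metis
  have "list_all2 (\<lambda>U W. U \<inter> H = W \<inter> H) Us (map g Us)"
    "list_all2 (\<lambda>U W. U \<inter> H = W \<inter> H) (map g Us) Us"
    using Us g by (auto simp: list_all2_conv_all_nth)
  then have "word_pattern Us \<inter> lists H = word_pattern (map g Us) \<inter> lists H"
    by (blast intro: word_pattern_trace)
  moreover have "openin (subword_topology \<sigma>2) (word_pattern (map g Us))"
    using Us g by (intro openin_word_pattern) auto
  ultimately show "\<exists>Y. openin (subword_topology \<sigma>2) Y \<and> X \<inter> lists H = Y \<inter> lists H"
    using X by blast
qed

lemma almost_full_on_pointed_opens:
  assumes "noetherian \<tau>"
  shows "almost_full_on (\<lambda>p q. snd q \<in> fst p) {(U, x). openin \<tau> U \<and> x \<in> U}"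
  unfolding almost_full_on_def good_def
proof (intro allI impI)
  fix f :: "nat \<Rightarrow> 'a set \<times> 'a" assume f: "\<forall>i. f i \<in> {(U, x). openin \<tau> U \<and> x \<in> U}"
  have f_open: "openin \<tau> (fst (f i))" and f_in: "snd (f i) \<in> fst (f i)" for i
    using f[rule_format, of i] by (simp_all add: case_prod_beta)
  have "has_finite_subunion (range (fst \<circ> f))"
    using f_open by (intro has_finite_subunion_opens[OF assms]) auto
  then obtain G where G: "G \<subseteq> range (fst \<circ> f)" "finite G" "\<Union>G = \<Union>(range (fst \<circ> f))"
    unfolding has_finite_subunion_def by blast
  then obtain I :: "nat set" where I: "finite I" "G = (fst \<circ> f) ` I"
    by (meson finite_subset_image)
  obtain N where N: "I \<subseteq> {..<N}" using finite_nat_bounded[OF I(1)] by blast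
  have "snd (f N) \<in> \<Union>G" unfolding G(3) using f_in by auto
  then obtain i where "i \<in> I" "snd (f N) \<in> fst (f i)" unfolding I(2) by auto
  then show "\<exists>i j. i < j \<and> snd (f j) \<in> fst (f i)" using N by blast
qed

text \<open>Higman's lemma for the pairs \<open>(U, x)\<close> with \<open>x \<in> U\<close>, where \<open>(U, x) \<le> (U', x')\<close> iff
  \<open>x' \<in> U\<close>, shows that in any sequence of words taken from patterns, some later word lies in
  an earlier pattern.\<close>

lemma noetherian_subword_topology:
  assumes noeth: "noetherian \<tau>"
  shows "noetherian (subword_topology \<tau>)"
  unfolding subword_topology_def
proof (rule noetherian_gen_top, rule has_finite_subunion_if_good_seqs)
  fix C and P :: "nat \<Rightarrow> 'a list set" and w
  assume C: "C \<subseteq> {word_pattern Us | Us. \<forall>U\<in>set Us. openin \<tau> U}"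
    and P: "\<And>j. P j \<in> C" and w: "\<And>j. w j \<in> P j"
  have "\<forall>j. \<exists>Us. P j = word_pattern Us \<and> (\<forall>U\<in>set Us. openin \<tau> U)" using P C by blast
  then obtain Us where Us: "\<And>j. P j = word_pattern (Us j)" "\<And>j. \<forall>U\<in>set (Us j). openin \<tau> U"
    by metis
  have "\<forall>j. \<exists>xs. subseq xs (w j) \<and> list_all2 (\<in>) xs (Us j)"
    using w Us(1) by (auto simp: word_pattern_def)
  then obtain xs where xs: "\<And>j. subseq (xs j) (w j)" "\<And>j. list_all2 (\<in>) (xs j) (Us j)"
    by metis
  have len: "length (xs j) = length (Us j)" for j using xs(2) list_all2_lengthD by blast
  define z where "z j = zip (Us j) (xs j)" for j
  have "z j \<in> lists {(U, x). openin \<tau> U \<and> x \<in> U}" for j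
    using xs(2)[of j] Us(2)[of j] len[of j]
    by (auto simp: z_def set_zip list_all2_conv_all_nth)
  then obtain i j where ij: "i < j" "list_emb (\<lambda>p q. snd q \<in> fst p) (z i) (z j)"
    using almost_full_on_lists[OF almost_full_on_pointed_opens[OF noeth]]
    unfolding almost_full_on_def good_def by blast
  then obtain ys where ys: "subseq ys (z j)" "list_all2 (\<lambda>p q. snd q \<in> fst p) (z i) ys"
    using list_emb_iff_subseq_list_all2 by blast
  have "subseq (map snd ys) (map snd (z j))" using ys(1) by (rule subseq_map)
  then have "subseq (map snd ys) (w j)"
    using xs(1)[of j] len[of j] by (simp add: z_def)
  moreover have "list_all2 (\<in>) (map snd ys) (Us i)"
    using ys(2) len[of i] unfolding list_all2_conv_all_nth z_def by auto
  ultimately have "w j \<in> P i" using Us(1) by (auto simp: word_pattern_def)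
  then show "\<exists>i j. i < j \<and> w j \<in> P i" using ij(1) by blast
qed

section \<open>Trees and Kruskal's embedding\<close>

fun ftree_root :: "'a ftree \<Rightarrow> 'a" where
  "ftree_root (Node a ts) = a"

fun ftree_children :: "'a ftree \<Rightarrow> 'a ftree list" where
  "ftree_children (Node a ts) = ts"

lemma node_set_eq: "node_set U V = {t. ftree_root t \<in> U \<and> ftree_children t \<in> V}"
  unfolding node_set_def by (metis (mono_tags) ftree_children.simps ftree_root.simps ftree.exhaust)

lemma Node_in_node_set [simp]: "Node a ts \<in> node_set U V \<longleftrightarrow> a \<in> U \<and> ts \<in> V"
  by (simp add: node_set_eq)

lemma node_set_UNIV: "node_set UNIV UNIV = UNIV"
  by (simp add: node_set_eq)

lemma node_set_eq_Int: "node_set U V = node_set U UNIV \<inter> node_set UNIV V"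
  by (auto simp: node_set_eq)

lemma subtrees_self: "t \<in> subtrees t"
  by (cases t) auto

lemma subtrees_trans: "s \<in> subtrees t \<Longrightarrow> t \<in> subtrees u \<Longrightarrow> s \<in> subtrees u"
  by (induction u arbitrary: t) auto

lemma tree_emb_refl: "(\<And>x. le x x) \<Longrightarrow> tree_emb le t t"
  by (induction t) (auto intro!: tree_emb.root list_emb_refl)

lemma tree_emb_subtree: "(\<And>x. le x x) \<Longrightarrow> s \<in> subtrees t \<Longrightarrow> tree_emb le s t"
  by (induction t) (auto intro: tree_emb.sub tree_emb_refl)

lemma tree_emb_trans:
  assumes trans: "\<And>x y z. le x y \<Longrightarrow> le y z \<Longrightarrow> le x z"
    and "tree_emb le s t" and "tree_emb le t u"
  shows "tree_emb le s u"
  using assms(3,2)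
proof (induction t u arbitrary: s rule: tree_emb.induct)
  case (sub t' us t a)
  then show ?case by (blast intro: tree_emb.sub)
next
  case (root b a ts us)
  from root.prems consider (sub) t' where "t' \<in> set ts" "tree_emb le s t'"
    | (root) c ss where "s = Node c ss" "le c b" "list_emb (tree_emb le) ss ts"
    by (cases rule: tree_emb.cases) auto
  then show ?case
  proof cases
    case sub
    then obtain u' where "u' \<in> set us" "tree_emb le t' u' \<and> (\<forall>s. tree_emb le s t' \<longrightarrow> tree_emb le s u')"
      using root.IH by (auto elim: list_emb_set)
    then show ?thesis using sub(2) by (auto intro: tree_emb.sub)
  next
    case root
    have "list_emb (tree_emb le) ss us"
      using root(3) root.IH by (rule list_emb_compose) blast
    then show ?thesis using root trans \<open>le b a\<close> by (auto intro: tree_emb.root)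
  qed
qed

lemma tree_emb_into_diamond:
  assumes U: "up_closed le U" and V: "up_closed (list_emb (tree_emb le)) V"
  shows "tree_emb le s t \<Longrightarrow> s \<in> node_set U V \<Longrightarrow> t \<in> diamond (node_set U V)"
proof (induction s t rule: tree_emb.induct)
  case (sub t ts s a)
  then show ?case using subtrees_trans[of _ t "Node a ts"] by (auto simp: diamond_def)
next
  case (root b a ss ts)
  have "list_emb (tree_emb le) ss ts" using root.IH by (rule list_emb_mono[rule_format, rotated]) blast
  then have "Node a ts \<in> node_set U V" using root U V by (auto simp: up_closed_def)
  then show ?case using subtrees_self by (auto simp: diamond_def)
qed

lemma upclosure_node_set_eq_diamond:
  assumes "\<And>x. le x x" and "up_closed le U" and "up_closed (list_emb (tree_emb le)) V"
  shows "upclosure (tree_emb le) (node_set U V) = diamond (node_set U V)"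
proof
  show "upclosure (tree_emb le) (node_set U V) \<subseteq> diamond (node_set U V)"
    using tree_emb_into_diamond[OF assms(2,3)] by (auto simp: upclosure_def)
  show "diamond (node_set U V) \<subseteq> upclosure (tree_emb le) (node_set U V)"
    using tree_emb_subtree[of le, OF assms(1)] by (auto simp: upclosure_def diamond_def)
qed

abbreviation tree_le :: "'a topology \<Rightarrow> 'a ftree \<Rightarrow> 'a ftree \<Rightarrow> bool" where
  "tree_le \<theta> \<equiv> tree_emb (spec_le \<theta>)"

lemma tree_le_refl: "tree_le \<theta> t t"
  by (rule tree_emb_refl) (simp add: spec_le_def)

lemma tree_le_trans: "tree_le \<theta> s t \<Longrightarrow> tree_le \<theta> t u \<Longrightarrow> tree_le \<theta> s u"
  by (rule tree_emb_trans[of "spec_le \<theta>"]) (auto simp: spec_le_def)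

lemma up_closed_spec_le: "openin \<theta> U \<Longrightarrow> up_closed (spec_le \<theta>) U"
  by (auto simp: up_closed_def spec_le_def)

lemma upclosure_eq_diamond:
  assumes "openin \<theta> U" and "openin (subword_topology \<tau>) V"
    and "\<And>S. openin \<tau> S \<Longrightarrow> up_closed (tree_le \<theta>) S"
  shows "upclosure (tree_le \<theta>) (node_set U V) = diamond (node_set U V)"
  using assms
  by (intro upclosure_node_set_eq_diamond up_closed_spec_le up_closed_subword_topology)
     (auto simp: spec_le_def)

section \<open>The tree topology as least fixed point of \<open>K\<close>\<close>

text \<open>The defining property of the tree topology passes to intersections of topologies because
  the subword topology is monotone.\<close>

definition meet_tree_tops :: "'a topology \<Rightarrow> 'a ftree topology" where
  "meet_tree_tops \<theta> = topology (\<lambda>S. \<forall>\<tau>. top_on_univ \<tau> \<and> tree_top_prop \<theta> \<tau> \<longrightarrow> openin \<tau> S)"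

lemma openin_meet_tree_tops:
  "openin (meet_tree_tops \<theta>) S \<longleftrightarrow> (\<forall>\<tau>. top_on_univ \<tau> \<and> tree_top_prop \<theta> \<tau> \<longrightarrow> openin \<tau> S)"
proof -
  have "istopology (\<lambda>S. \<forall>\<tau>. top_on_univ \<tau> \<and> tree_top_prop \<theta> \<tau> \<longrightarrow> openin \<tau> S)"
    unfolding istopology_def by (auto intro: openin_Int openin_Union)
  then show ?thesis unfolding meet_tree_tops_def by simp
qed

lemma is_tree_topology_meet_tree_tops: "is_tree_topology \<theta> (meet_tree_tops \<theta>)"
proof -
  have coarsest: "coarser (meet_tree_tops \<theta>) \<tau>" if "top_on_univ \<tau>" "tree_top_prop \<theta> \<tau>" for \<tau>
    using that by (simp add: coarser_def openin_meet_tree_tops)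
  have "openin (meet_tree_tops \<theta>) UNIV"
    by (simp add: openin_meet_tree_tops openin_UNIV_if_top_on_univ)
  then have "top_on_univ (meet_tree_tops \<theta>)"
    unfolding top_on_univ_def using openin_subset by blast
  moreover have "tree_top_prop \<theta> (meet_tree_tops \<theta>)"
    unfolding tree_top_prop_def
  proof (intro allI impI)
    fix U V
    assume U: "openin \<theta> U" and V: "openin (subword_topology (meet_tree_tops \<theta>)) V"
    have "openin \<tau> (diamond (node_set U V))" if "top_on_univ \<tau>" "tree_top_prop \<theta> \<tau>" for \<tau>
    proof -
      have "openin (subword_topology \<tau>) V"
        using V subword_topology_mono[OF coarsest[OF that]] by (simp add: coarser_def)
      then show ?thesis using that(2) U by (simp add: tree_top_prop_def)
    qed
    then show "openin (meet_tree_tops \<theta>) (diamond (node_set U V))"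
      by (simp add: openin_meet_tree_tops)
  qed
  ultimately show ?thesis using coarsest by (simp add: is_tree_topology_def)
qed

lemma is_tree_topology_tree_topology: "is_tree_topology \<theta> (tree_topology \<theta>)"
proof -
  have unique: "\<tau> = meet_tree_tops \<theta>" if "is_tree_topology \<theta> \<tau>" for \<tau>
    using that is_tree_topology_meet_tree_tops[of \<theta>] unfolding is_tree_topology_def
    by (blast intro: coarser_antisym)
  have "tree_topology \<theta> = meet_tree_tops \<theta>"
    using is_tree_topology_meet_tree_tops unique unfolding tree_topology_def by (rule the_equality)
  then show ?thesis using is_tree_topology_meet_tree_tops by simp
qed

text \<open>The up-closed open sets of the tree topology already form a topology with the defining
  property.\<close>

lemma up_closed_tree_topology:
  assumes "openin (tree_topology \<theta>) S"
  shows "up_closed (tree_le \<theta>) S"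
proof -
  let ?T = "tree_topology \<theta>"
  have T: "top_on_univ ?T" "tree_top_prop \<theta> ?T"
    "\<And>\<tau>. top_on_univ \<tau> \<Longrightarrow> tree_top_prop \<theta> \<tau> \<Longrightarrow> coarser ?T \<tau>"
    using is_tree_topology_tree_topology[of \<theta>] by (simp_all add: is_tree_topology_def)
  define \<sigma> where "\<sigma> = topology (\<lambda>S. openin ?T S \<and> up_closed (tree_le \<theta>) S)"
  have "istopology (\<lambda>S. openin ?T S \<and> up_closed (tree_le \<theta>) S)"
    unfolding istopology_def by (auto intro: openin_Int openin_Union simp: up_closed_def)
  then have open_\<sigma>: "openin \<sigma> S \<longleftrightarrow> openin ?T S \<and> up_closed (tree_le \<theta>) S" for S
    by (simp add: \<sigma>_def)
  have "openin \<sigma> UNIV" using openin_UNIV_if_top_on_univ[OF T(1)] by (simp add: open_\<sigma> up_closed_def)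
  then have "top_on_univ \<sigma>" unfolding top_on_univ_def using openin_subset by blast
  moreover have "tree_top_prop \<theta> \<sigma>"
    unfolding tree_top_prop_def
  proof (intro allI impI)
    fix U V assume U: "openin \<theta> U" and V: "openin (subword_topology \<sigma>) V"
    have "coarser \<sigma> ?T" by (simp add: coarser_def open_\<sigma>)
    then have "openin (subword_topology ?T) V"
      using V subword_topology_mono by (auto simp: coarser_def)
    then have "openin ?T (diamond (node_set U V))" using T(2) U by (simp add: tree_top_prop_def)
    moreover have "upclosure (tree_le \<theta>) (node_set U V) = diamond (node_set U V)"
      by (rule upclosure_eq_diamond[OF U V]) (simp add: open_\<sigma>)
    then have "up_closed (tree_le \<theta>) (diamond (node_set U V))"
      using up_closed_upclosure[of "tree_le \<theta>"] tree_le_trans by metis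
    ultimately show "openin \<sigma> (diamond (node_set U V))" by (simp add: open_\<sigma>)
  qed
  ultimately have "coarser ?T \<sigma>" by (rule T(3))
  then show ?thesis using assms by (simp add: coarser_def open_\<sigma>)
qed

definition K_basis :: "'a topology \<Rightarrow> 'a ftree topology \<Rightarrow> 'a ftree set set" where
  "K_basis \<theta> \<tau> =
     {upclosure (tree_le \<theta>) (node_set U V) | U V. openin \<theta> U \<and> openin (subword_topology \<tau>) V}"

lemma K_map_eq_gen_top_K_basis: "K_map \<theta> \<tau> = gen_top (K_basis \<theta> \<tau>)"
  by (simp add: K_map_def K_basis_def)

lemma top_on_univ_K_map: "top_on_univ (K_map \<theta> \<tau>)"
  by (simp add: K_map_eq_gen_top_K_basis)

lemma up_closed_K_map: "openin (K_map \<theta> \<tau>) S \<Longrightarrow> up_closed (tree_le \<theta>) S"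
  unfolding K_map_eq_gen_top_K_basis K_basis_def by (rule up_closed_gen_top) (auto intro: up_closed_upclosure tree_le_trans)

lemma K_map_eq_gen_top_diamonds:
  assumes "\<And>S. openin \<tau> S \<Longrightarrow> up_closed (tree_le \<theta>) S"
  shows "K_map \<theta> \<tau> =
    gen_top {diamond (node_set U V) | U V. openin \<theta> U \<and> openin (subword_topology \<tau>) V}"
proof -
  have "upclosure (tree_le \<theta>) (node_set U V) = diamond (node_set U V)"
    if "openin \<theta> U" "openin (subword_topology \<tau>) V" for U V
    using that assms by (rule upclosure_eq_diamond)
  then show ?thesis
    unfolding K_map_eq_gen_top_K_basis K_basis_def by (intro arg_cong[where f = gen_top]) blast
qed

lemma K_map_tree_topology: "K_map \<theta> (tree_topology \<theta>) = tree_topology \<theta>"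
proof -
  let ?T = "tree_topology \<theta>"
  let ?D = "{diamond (node_set U V) | U V. openin \<theta> U \<and> openin (subword_topology ?T) V}"
  have T: "top_on_univ ?T" "tree_top_prop \<theta> ?T"
    "\<And>\<tau>. top_on_univ \<tau> \<Longrightarrow> tree_top_prop \<theta> \<tau> \<Longrightarrow> coarser ?T \<tau>"
    using is_tree_topology_tree_topology[of \<theta>] by (simp_all add: is_tree_topology_def)
  have K: "K_map \<theta> ?T = gen_top ?D"
    using up_closed_tree_topology by (rule K_map_eq_gen_top_diamonds)
  have D_T: "coarser (gen_top ?D) ?T"
    using T(1,2) by (intro gen_top_coarsest) (auto simp: tree_top_prop_def)
  have "tree_top_prop \<theta> (gen_top ?D)"
    unfolding tree_top_prop_def
  proof (intro allI impI)
    fix U V assume "openin \<theta> U" and "openin (subword_topology (gen_top ?D)) V"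
    moreover from this(2) have "openin (subword_topology ?T) V"
      using subword_topology_mono[OF D_T] by (simp add: coarser_def)
    ultimately show "openin (gen_top ?D) (diamond (node_set U V))"
      by (intro openin_gen_top_Basis) blast
  qed
  then have "coarser ?T (gen_top ?D)" by (intro T(3)) simp
  with D_T K show ?thesis by (simp add: coarser_antisym)
qed

lemma tree_top_prop_if_K_map_fixed:
  assumes fixed: "K_map \<theta> \<tau> = \<tau>"
  shows "tree_top_prop \<theta> \<tau>"
proof -
  have "\<And>S. openin \<tau> S \<Longrightarrow> up_closed (tree_le \<theta>) S"
    using up_closed_K_map[of \<theta> \<tau>] fixed by simp
  then have K_eq: "K_map \<theta> \<tau> =
      gen_top {diamond (node_set U V) | U V. openin \<theta> U \<and> openin (subword_topology \<tau>) V}"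
    by (rule K_map_eq_gen_top_diamonds)
  show ?thesis
    unfolding tree_top_prop_def
  proof (intro allI impI)
    fix U V assume "openin \<theta> U" and "openin (subword_topology \<tau>) V"
    then have "openin (K_map \<theta> \<tau>) (diamond (node_set U V))"
      unfolding K_eq by (intro openin_gen_top_Basis) blast
    then show "openin \<tau> (diamond (node_set U V))" using fixed by simp
  qed
qed

lemma least_fixpoint_K_map: "least_fixpoint (K_map \<theta>) (tree_topology \<theta>)"
  using is_tree_topology_tree_topology[of \<theta>]
  unfolding least_fixpoint_def is_tree_topology_def
  by (simp add: K_map_tree_topology tree_top_prop_if_K_map_fixed)

lemma K_map_mono:
  assumes "coarser \<tau>1 \<tau>2"
  shows "coarser (K_map \<theta> \<tau>1) (K_map \<theta> \<tau>2)"
proof -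
  have "openin (subword_topology \<tau>2) V" if "openin (subword_topology \<tau>1) V" for V
    using subword_topology_mono[OF assms] that by (simp add: coarser_def)
  then have "K_basis \<theta> \<tau>1 \<subseteq> K_basis \<theta> \<tau>2" unfolding K_basis_def by blast
  then show ?thesis unfolding K_map_eq_gen_top_K_basis by (rule gen_top_mono)
qed

section \<open>\<open>K\<close> preserves Noetherianity\<close>

text \<open>Each \<open>\<up>U\<langle>V\<rangle>\<close> is the upward closure of an open set of the following topology, which is
  Noetherian as a product of Noetherian spaces.\<close>

definition node_top :: "'a topology \<Rightarrow> 'a ftree topology \<Rightarrow> 'a ftree topology" where
  "node_top \<theta> \<tau> = gen_top ({node_set U UNIV | U. openin \<theta> U} \<union>
                              {node_set UNIV V | V. openin (subword_topology \<tau>) V})"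

lemma noetherian_node_top:
  assumes "noetherian \<theta>" and "noetherian \<tau>"
  shows "noetherian (node_top \<theta> \<tau>)"
  unfolding node_top_def
proof (rule noetherian_gen_top)
  fix C
  assume C: "C \<subseteq> {node_set U UNIV | U. openin \<theta> U} \<union>
                 {node_set UNIV V | V. openin (subword_topology \<tau>) V}"
  have "has_finite_subunion (C \<inter> {node_set U UNIV | U. openin \<theta> U})"
  proof (rule has_finite_subunion_relational_images[OF assms(1), where r = "\<lambda>s t. s = ftree_root t"])
    fix X assume "X \<in> C \<inter> {node_set U UNIV | U. openin \<theta> U}"
    then show "\<exists>A. openin \<theta> A \<and> X = {t. \<exists>s\<in>A. s = ftree_root t}"
      by (auto simp: node_set_eq)
  qed
  moreover have "has_finite_subunion (C \<inter> {node_set UNIV V | V. openin (subword_topology \<tau>) V})"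
  proof (rule has_finite_subunion_relational_images[OF noetherian_subword_topology[OF assms(2)],
        where r = "\<lambda>s t. s = ftree_children t"])
    fix X assume "X \<in> C \<inter> {node_set UNIV V | V. openin (subword_topology \<tau>) V}"
    then show "\<exists>A. openin (subword_topology \<tau>) A \<and> X = {t. \<exists>s\<in>A. s = ftree_children t}"
      by (auto simp: node_set_eq)
  qed
  ultimately have "has_finite_subunion ((C \<inter> {node_set U UNIV | U. openin \<theta> U}) \<union>
      (C \<inter> {node_set UNIV V | V. openin (subword_topology \<tau>) V}))"
    by (rule has_finite_subunion_Un)
  moreover have "(C \<inter> {node_set U UNIV | U. openin \<theta> U}) \<union>
      (C \<inter> {node_set UNIV V | V. openin (subword_topology \<tau>) V}) = C"
    using C by blast
  ultimately show "has_finite_subunion C" by simp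
qed

lemma openin_node_top_node_set:
  assumes "openin \<theta> U" and "openin (subword_topology \<tau>) V"
  shows "openin (node_top \<theta> \<tau>) (node_set U V)"
proof -
  have "openin (node_top \<theta> \<tau>) (node_set U UNIV)" "openin (node_top \<theta> \<tau>) (node_set UNIV V)"
    unfolding node_top_def using assms by (auto intro!: openin_gen_top_Basis)
  then show ?thesis by (subst node_set_eq_Int) (rule openin_Int)
qed

lemma noetherian_K_map:
  assumes "noetherian \<theta>" and "noetherian \<tau>"
  shows "noetherian (K_map \<theta> \<tau>)"
  unfolding K_map_eq_gen_top_K_basis
proof (rule noetherian_gen_top)
  fix C assume C: "C \<subseteq> K_basis \<theta> \<tau>"
  show "has_finite_subunion C"
  proof (rule has_finite_subunion_relational_images[OF noetherian_node_top[OF assms], where r = "tree_le \<theta>"])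
    fix X assume "X \<in> C"
    then obtain U V where "openin \<theta> U" "openin (subword_topology \<tau>) V"
      and "X = upclosure (tree_le \<theta>) (node_set U V)"
      using C by (auto simp: K_basis_def)
    then show "\<exists>A. openin (node_top \<theta> \<tau>) A \<and> X = {t. \<exists>s\<in>A. tree_le \<theta> s t}"
      by (intro exI[of _ "node_set U V"]) (simp add: upclosure_def openin_node_top_node_set)
  qed
qed

section \<open>\<open>K\<close> is a topology expander\<close>

text \<open>Inside a set \<open>H\<close> closed under taking embedded trees, only the trace of \<open>V\<close> on \<open>H\<^sup>*\<close>
  matters for \<open>\<up>U\<langle>V\<rangle>\<close>: the witness below a tree of \<open>H\<close> lies in \<open>H\<close>, and so do its children.\<close>

lemma upclosure_node_set_trace_subset:
  assumes refl_le: "\<And>x. le x x" and down: "\<And>s t. tree_emb le s t \<Longrightarrow> t \<in> H \<Longrightarrow> s \<in> H"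
    and trace: "V \<inter> lists H = V' \<inter> lists H"
  shows "upclosure (tree_emb le) (node_set U V) \<inter> H \<subseteq> upclosure (tree_emb le) (node_set U V') \<inter> H"
proof
  fix t assume "t \<in> upclosure (tree_emb le) (node_set U V) \<inter> H"
  then obtain s where s: "s \<in> node_set U V" "tree_emb le s t" and "t \<in> H"
    by (auto simp: upclosure_def)
  obtain b ss where s_eq: "s = Node b ss" by (cases s)
  have "s \<in> H" using down s(2) \<open>t \<in> H\<close> by blast
  moreover have "tree_emb le c s" if "c \<in> set ss" for c
    unfolding s_eq by (rule tree_emb.sub[OF that tree_emb_refl[OF refl_le]])
  ultimately have "ss \<in> lists H" using down by blast
  then have "s \<in> node_set U V'" using s(1) trace by (auto simp: s_eq)
  then show "t \<in> upclosure (tree_emb le) (node_set U V') \<inter> H"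
    using s(2) \<open>t \<in> H\<close> by (auto simp: upclosure_def)
qed

lemma K_basis_trace_subset:
  assumes down: "\<And>s t. tree_le \<theta> s t \<Longrightarrow> t \<in> H \<Longrightarrow> s \<in> H"
    and transfer: "\<And>A. openin \<sigma>1 A \<Longrightarrow> \<exists>B. openin \<sigma>2 B \<and> A \<inter> H = B \<inter> H"
  shows "{W \<inter> H | W. W \<in> K_basis \<theta> \<sigma>1} \<subseteq> {W \<inter> H | W. W \<in> K_basis \<theta> \<sigma>2}"
proof
  fix X assume "X \<in> {W \<inter> H | W. W \<in> K_basis \<theta> \<sigma>1}"
  then obtain U V where U: "openin \<theta> U" and V: "openin (subword_topology \<sigma>1) V"
    and X: "X = upclosure (tree_le \<theta>) (node_set U V) \<inter> H"
    by (auto simp: K_basis_def)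
  obtain V' where V': "openin (subword_topology \<sigma>2) V'" and trace: "V \<inter> lists H = V' \<inter> lists H"
    using subword_topology_trace_transfer[OF transfer V] by blast
  have refl_spec: "\<And>x. spec_le \<theta> x x" by (simp add: spec_le_def)
  have sub: "upclosure (tree_le \<theta>) (node_set U V1) \<inter> H \<subseteq> upclosure (tree_le \<theta>) (node_set U V2) \<inter> H"
    if "V1 \<inter> lists H = V2 \<inter> lists H" for V1 V2
    by (rule upclosure_node_set_trace_subset[OF refl_spec down that])
  have "X = upclosure (tree_le \<theta>) (node_set U V') \<inter> H"
    unfolding X using sub[OF trace] sub[OF trace[symmetric]] by (rule equalityI)
  moreover have "upclosure (tree_le \<theta>) (node_set U V') \<in> K_basis \<theta> \<sigma>2"
    using U V' by (auto simp: K_basis_def)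
  ultimately show "X \<in> {W \<inter> H | W. W \<in> K_basis \<theta> \<sigma>2}" by blast
qed

lemma UNIV_in_K_basis:
  assumes "topspace \<theta> = UNIV"
  shows "UNIV \<in> K_basis \<theta> \<tau>"
proof -
  have "upclosure (tree_le \<theta>) (node_set UNIV UNIV) = UNIV"
    by (auto simp: upclosure_def node_set_UNIV intro: tree_le_refl)
  moreover have "openin \<theta> UNIV" by (metis assms openin_topspace)
  moreover have "openin (subword_topology \<tau>) UNIV"
    by (simp add: subword_topology_def openin_UNIV_if_top_on_univ)
  ultimately show ?thesis unfolding K_basis_def by blast
qed

lemma K_map_restrict_top:
  assumes \<theta>: "topspace \<theta> = UNIV" and \<tau>: "top_on_univ \<tau>"
    and refines: "coarser \<tau> (K_map \<theta> \<tau>)" and H: "closedin \<tau> H"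
  shows "restrict_top (K_map \<theta> \<tau>) H = restrict_top (K_map \<theta> (restrict_top \<tau> H)) H"
proof -
  have "openin \<tau> (UNIV - H)" using H \<tau> by (simp add: closedin_def top_on_univ_def)
  then have "up_closed (tree_le \<theta>) (UNIV - H)"
    using refines by (intro up_closed_K_map[of \<theta> \<tau>]) (simp add: coarser_def)
  then have down: "\<And>s t. tree_le \<theta> s t \<Longrightarrow> t \<in> H \<Longrightarrow> s \<in> H" unfolding up_closed_def by blast
  have to_restrict: "\<exists>B. openin (restrict_top \<tau> H) B \<and> A \<inter> H = B \<inter> H" if "openin \<tau> A" for A
    using that unfolding restrict_top_def by (intro exI[of _ "A \<inter> H"]) (auto intro: openin_gen_top_Basis)
  have from_restrict: "\<exists>B. openin \<tau> B \<and> A \<inter> H = B \<inter> H" if "openin (restrict_top \<tau> H) A" for A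
    using openin_restrict_topE[OF \<tau> that] by blast
  have "{W \<inter> H | W. W \<in> K_basis \<theta> \<tau>} = {W \<inter> H | W. W \<in> K_basis \<theta> (restrict_top \<tau> H)}"
    using K_basis_trace_subset[OF down to_restrict] K_basis_trace_subset[OF down from_restrict]
    by (rule equalityI)
  then show ?thesis
    unfolding K_map_eq_gen_top_K_basis by (simp add: restrict_top_gen_top UNIV_in_K_basis[OF \<theta>])
qed

theorem mainTheorem14:
  fixes \<theta> :: "'a topology"
  assumes "topspace \<theta> = UNIV" and "noetherian \<theta>"
  shows "is_tree_topology \<theta> (tree_topology \<theta>)
         \<and> least_fixpoint (K_map \<theta>) (tree_topology \<theta>)
         \<and> topology_expander (K_map \<theta>)"
proof (intro conjI)
  show "is_tree_topology \<theta> (tree_topology \<theta>)" by (rule is_tree_topology_tree_topology)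
  show "least_fixpoint (K_map \<theta>) (tree_topology \<theta>)" by (rule least_fixpoint_K_map)
  have "refinement_function (K_map \<theta>)"
    unfolding refinement_function_def
    by (simp add: top_on_univ_K_map K_map_mono noetherian_K_map[OF assms(2)])
  then show "topology_expander (K_map \<theta>)"
    unfolding topology_expander_def using K_map_restrict_top[OF assms(1)] by blast
qed

end
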